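(* Let $(Y,U)$ be discrete random variables with $Y$ taking values in a finite set $\mathcal{Y}$, let $\mu\in(0,\frac12)$ and $\epsilon>0$. If $$\Pr\left(|h(Y|U)-c|>\epsilon\right)<\mu$$ for some $c>0$, then $$|\mathbb{H}(Y|U)-c|<\epsilon+\mu\log_2\frac{|\mathcal{Y}|}{\mu^2}.$$
   Context: $h(Y|U)$ denotes the random variable $-\log_2 p_{Y|U}(Y|U)$; $\mathbb{H}(Y|U)$ is the conditional entropy. *)

theory Defs
  imports "HOL-Probability.Probability"
begin

text \<open>A pair of discrete random variables (Y,U) is given by its joint pmf
  p :: ('y \<times> 'u) pmf.\<close>

definition cond_prob :: "('y \<times> 'u) pmf \<Rightarrow> 'y \<Rightarrow> 'u \<Rightarrow> real" where
  "cond_prob p y u = pmf p (y, u) / pmf (map_pmf snd p) u"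

definition cond_info :: "('y \<times> 'u) pmf \<Rightarrow> 'y \<times> 'u \<Rightarrow> real" where
  "cond_info p yu = - log 2 (cond_prob p (fst yu) (snd yu))"

definition cond_entropy :: "('y \<times> 'u) pmf \<Rightarrow> real" where
  "cond_entropy p = measure_pmf.expectation p (cond_info p)"

end

theory Submission
  imports Defs
begin

text \<open>Write h(Y|U) = log2 g with g(y,u) = p_U(u) / p(y,u). Then g \<ge> 1 on the support,
  and E g \<le> |\<Y>| because p g is |\<Y>| times the law of the independent pair (uniform on \<Y>, U).
  Bounding log2 g by its tangent at |\<Y>| / P(S) shows that any event S contributes at most
  P(S) log2 (|\<Y>| / P(S)) to \<bbbH>(Y|U). Split \<bbbH>(Y|U) along the event S where h deviates from c
  by more than \<epsilon>: off S the integrand is within \<epsilon> of c, and S costs at most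
  P(S) log2 (|\<Y>| / P(S)) < \<mu> log2 (|\<Y>| / \<mu>^2), as P(S) < \<mu> < 1/2.\<close>

lemma ln_le_div_exp_1: "0 < x \<Longrightarrow> ln x \<le> x / exp (1::real)"
  using ln_le_minus_one[of "x / exp 1"] by (simp add: ln_div)

lemma mult_log2_inverse_le_1:
  fixes r :: real
  assumes "0 < r"
  shows "r * log 2 (1 / r) \<le> 1"
proof -
  have "r * ln (1 / r) \<le> r * (1 / r / exp 1)"
    using assms ln_le_div_exp_1[of "1 / r"] by (intro mult_left_mono) auto
  also have "\<dots> = 1 / exp 1" using assms by simp
  also have "\<dots> \<le> ln 2"
  proof -
    have "2 \<le> exp (1::real)" using exp_ge_add_one_self[of 1] by simp
    then have "1 \<le> exp 1 * ln (2::real)"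
      using ln2_ge_two_thirds mult_mono[of 2 "exp 1" "2/3" "ln (2::real)"] by simp
    then show ?thesis by (simp add: divide_le_eq mult.commute)
  qed
  finally show ?thesis by (simp add: log_def divide_le_eq)
qed

lemma mult_log_div_less:
  fixes s \<mu> N :: real
  assumes "0 \<le> s" "s < \<mu>" "\<mu> < 1/2" "1 \<le> N"
  shows "s * log 2 (N / s) < \<mu> * log 2 (N / \<mu>\<^sup>2)"
proof -
  have \<mu>: "0 < \<mu>" using assms by linarith
  have log_inv_\<mu>: "1 < log 2 (1 / \<mu>)"
    using assms \<mu> by (subst less_log_iff) (auto simp: field_simps)
  have rhs: "\<mu> * log 2 (N / \<mu>\<^sup>2) = \<mu> * log 2 N + 2 * (\<mu> * log 2 (1 / \<mu>))"
    using assms \<mu> by (simp add: log_divide log_nat_power log_recip algebra_simps)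
  have "s * log 2 N \<le> \<mu> * log 2 N" using assms by (intro mult_right_mono) auto
  moreover have "s * log 2 (1 / s) < \<mu> * log 2 (1 / \<mu>) + \<mu> * log 2 (1 / \<mu>)"
  proof (cases "s = 0")
    case True
    then show ?thesis using mult_pos_pos[OF \<mu>, of "log 2 (1 / \<mu>)"] log_inv_\<mu> by simp
  next
    case False
    define r where "r = s / \<mu>"
    have r: "0 < r" using False assms \<mu> by (simp add: r_def)
    have "s * log 2 (1 / s) = s * log 2 (1 / \<mu>) + \<mu> * (r * log 2 (1 / r))"
      using False assms \<mu> by (simp add: r_def log_divide log_recip algebra_simps)
    moreover have "s * log 2 (1 / \<mu>) < \<mu> * log 2 (1 / \<mu>)"
      using assms log_inv_\<mu> by (intro mult_strict_right_mono) linarith+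
    moreover have "\<mu> * (r * log 2 (1 / r)) \<le> \<mu> * log 2 (1 / \<mu>)"
      using \<mu> log_inv_\<mu> mult_log2_inverse_le_1[OF r] by (intro mult_left_mono) linarith+
    ultimately show ?thesis by linarith
  qed
  moreover have "s * log 2 (N / s) = s * log 2 N + s * log 2 (1 / s)"
    using assms by (cases "s = 0") (simp_all add: log_divide log_recip right_diff_distrib)
  ultimately show ?thesis using rhs by linarith
qed

lemma integrable_log_of_ge_1:
  fixes g :: "'a \<Rightarrow> real"
  assumes g: "integrable M g" and ge_1: "AE x in M. 1 \<le> g x"
  shows "integrable M (\<lambda>x. log 2 (g x))"
proof (rule Bochner_Integration.integrable_bound)
  show "integrable M (\<lambda>x. 2 * g x)" using g by simp
  show "(\<lambda>x. log 2 (g x)) \<in> borel_measurable M"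
    using borel_measurable_integrable[OF g] by measurable
  show "AE x in M. norm (log 2 (g x)) \<le> norm (2 * g x)"
    using ge_1
  proof eventually_elim
    fix x assume "1 \<le> g x"
    moreover have "ln (g x) \<le> g x * (2 * ln 2)"
    proof -
      have "1 \<le> 2 * ln (2::real)" using ln2_ge_two_thirds by simp
      then have "g x * 1 \<le> g x * (2 * ln 2)" using \<open>1 \<le> g x\<close> by (intro mult_left_mono) auto
      then show ?thesis using ln_le_minus_one[of "g x"] \<open>1 \<le> g x\<close> by linarith
    qed
    ultimately show "norm (log 2 (g x)) \<le> norm (2 * g x)"
      by (simp add: log_def divide_le_eq)
  qed
qed

context prob_space
begin

lemma integral_log_indicator_le:
  fixes g :: "'a \<Rightarrow> real"
  assumes g: "integrable M g" and ge_1: "AE x in M. 1 \<le> g x" and le_N: "expectation g \<le> N"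
    and S: "S \<in> events"
  shows "(\<integral>x. log 2 (g x) * indicator S x \<partial>M) \<le> prob S * log 2 (N / prob S)"
proof (cases "prob S = 0")
  case True
  then have "AE x in M. x \<notin> S" using prob_eq_0[OF S] by simp
  then have "(\<integral>x. log 2 (g x) * indicator S x \<partial>M) = 0"
    by (intro integral_eq_zero_AE) auto
  with True show ?thesis by simp
next
  case False
  define s where "s = prob S"
  define t where "t = N / s"
  have N: "1 \<le> N" using integral_ge_const[OF g ge_1] le_N by linarith
  have s: "0 < s" using False measure_nonneg[of M S] unfolding s_def by linarith
  have t: "0 < t" using N s by (simp add: t_def)
  have g_S: "integrable M (\<lambda>x. g x * indicator S x)"
    using g S by (intro integrable_real_mult_indicator)
  have const_S: "integrable M (\<lambda>x. indicator S x * (ln t - 1))"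
    using S by (intro integrable_mult_left integrable_real_indicator) (auto simp: less_top[symmetric])
  have "(\<integral>x. log 2 (g x) * indicator S x \<partial>M)
      \<le> (\<integral>x. (indicator S x * (ln t - 1) + g x * indicator S x / t) / ln 2 \<partial>M)"
  proof (rule integral_mono_AE)
    show "integrable M (\<lambda>x. log 2 (g x) * indicator S x)"
      using integrable_log_of_ge_1[OF g ge_1] S by (intro integrable_real_mult_indicator)
    show "integrable M (\<lambda>x. (indicator S x * (ln t - 1) + g x * indicator S x / t) / ln 2)"
      using const_S g_S by simp
    show "AE x in M. log 2 (g x) * indicator S x
        \<le> (indicator S x * (ln t - 1) + g x * indicator S x / t) / ln 2"
      using ge_1
    proof eventually_elim
      fix x assume "1 \<le> g x"
      then have "ln (g x) \<le> ln t + (g x / t - 1)"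
        using ln_le_minus_one[of "g x / t"] t by (simp add: ln_div)
      then show "log 2 (g x) * indicator S x
          \<le> (indicator S x * (ln t - 1) + g x * indicator S x / t) / ln 2"
        by (simp add: indicator_def log_def divide_right_mono)
    qed
  qed
  also have "\<dots> = (s * (ln t - 1) + (\<integral>x. g x * indicator S x \<partial>M) / t) / ln 2"
    using const_S g_S S by (simp add: s_def)
  also have "\<dots> \<le> (s * (ln t - 1) + N / t) / ln 2"
  proof -
    have "(\<integral>x. g x * indicator S x \<partial>M) \<le> expectation g"
      using g_S g ge_1 by (intro integral_mono_AE) (auto simp: indicator_def)
    then show ?thesis using le_N t by (intro divide_right_mono add_left_mono) auto
  qed
  also have "\<dots> = s * log 2 t" using s N by (simp add: t_def log_def field_simps)
  finally show ?thesis by (simp add: s_def t_def)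
qed

lemma expectation_log_deviation_le:
  fixes g :: "'a \<Rightarrow> real" and c \<epsilon> :: real
  defines "S \<equiv> {x \<in> space M. \<epsilon> < \<bar>log 2 (g x) - c\<bar>}"
  assumes g: "integrable M g" and ge_1: "AE x in M. 1 \<le> g x" and le_N: "expectation g \<le> N"
    and c: "0 \<le> c" and \<epsilon>: "0 \<le> \<epsilon>" and S_half: "prob S \<le> 1/2"
  shows "\<bar>expectation (\<lambda>x. log 2 (g x)) - c\<bar> \<le> \<epsilon> + prob S * log 2 (N / prob S)"
proof -
  define s where "s = prob S"
  define A where "A = space M - S"
  define G where "G = (\<integral>x. log 2 (g x) * indicator A x \<partial>M)"
  define B where "B = (\<integral>x. log 2 (g x) * indicator S x \<partial>M)"
  have S: "S \<in> events" unfolding S_def using borel_measurable_integrable[OF g] by measurable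
  then have A: "A \<in> events" and prob_A: "prob A = 1 - s"
    by (auto simp: A_def s_def prob_compl)
  have s: "0 \<le> s" "s \<le> 1/2" using S_half by (auto simp: s_def)
  have h: "integrable M (\<lambda>x. log 2 (g x))" using integrable_log_of_ge_1[OF g ge_1] .
  have N: "0 < N" using integral_ge_const[OF g ge_1] le_N by linarith
  have "expectation (\<lambda>x. log 2 (g x))
      = (\<integral>x. log 2 (g x) * indicator A x + log 2 (g x) * indicator S x \<partial>M)"
    by (intro Bochner_Integration.integral_cong) (auto simp: A_def indicator_def)
  also have "\<dots> = G + B"
    unfolding G_def B_def using h A S
    by (intro Bochner_Integration.integral_add integrable_real_mult_indicator)
  finally have split: "expectation (\<lambda>x. log 2 (g x)) = G + B" .
  have const_A: "\<And>k::real. integrable M (\<lambda>x. indicator A x * k)"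
    using A by (intro integrable_mult_left integrable_real_indicator) (auto simp: less_top[symmetric])
  have "(\<integral>x. indicator A x * (c - \<epsilon>) \<partial>M) \<le> G"
    unfolding G_def using h A
    by (intro integral_mono const_A integrable_real_mult_indicator)
      (auto simp: A_def S_def indicator_def)
  then have G_lower: "(c - \<epsilon>) * (1 - s) \<le> G"
    using prob_A by (simp add: A_def Int_absorb2 mult.commute)
  have "G \<le> (\<integral>x. indicator A x * (c + \<epsilon>) \<partial>M)"
    unfolding G_def using h A
    by (intro integral_mono const_A integrable_real_mult_indicator)
      (auto simp: A_def S_def indicator_def)
  then have G_upper: "G \<le> (c + \<epsilon>) * (1 - s)"
    using prob_A by (simp add: A_def Int_absorb2 mult.commute)
  have G_log: "G \<le> (1 - s) * log 2 (N / (1 - s))"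
    using integral_log_indicator_le[OF g ge_1 le_N A] prob_A by (simp add: G_def)
  have B_log: "B \<le> s * log 2 (N / s)"
    using integral_log_indicator_le[OF g ge_1 le_N S] by (simp add: B_def s_def)
  have B_nonneg: "0 \<le> B"
    unfolding B_def using ge_1 by (intro integral_nonneg_AE) (auto simp: indicator_def)
  txt \<open>The lower deviation needs an upper bound on \<open>c\<close>: the typical set has the information
    bound too, and \<open>s \<le> 1/2\<close> turns it into the bound for \<open>S\<close>.\<close>
  have "(1 - s) * (c - \<epsilon>) \<le> (1 - s) * log 2 (N / (1 - s))"
    using G_lower G_log by (simp add: mult.commute)
  moreover have "0 < 1 - s" using s by linarith
  ultimately have "c - \<epsilon> \<le> log 2 (N / (1 - s))" by simp
  also have "\<dots> \<le> log 2 (N / s)" if "0 < s"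
    using that s N by (simp add: divide_left_mono)
  finally have "s * (c - \<epsilon>) \<le> s * log 2 (N / s)"
    using s by (cases "s = 0") (auto intro: mult_left_mono)
  then have "c - (G + B) \<le> \<epsilon> + s * log 2 (N / s)"
    using G_lower B_nonneg by (simp add: algebra_simps)
  moreover have "G + B - c \<le> \<epsilon> + s * log 2 (N / s)"
  proof -
    have "(c + \<epsilon>) * (1 - s) = c + \<epsilon> - s * (c + \<epsilon>)" by (simp add: algebra_simps)
    moreover have "0 \<le> s * (c + \<epsilon>)" using s c \<epsilon> by simp
    ultimately show ?thesis using G_upper B_log by linarith
  qed
  ultimately show ?thesis using split by (simp add: s_def abs_le_iff)
qed

end

lemma pmf_le_pmf_map_snd: "pmf p yu \<le> pmf (map_pmf snd p) (snd yu)"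
proof -
  have "measure_pmf.prob p {yu} \<le> measure_pmf.prob p (snd -` {snd yu})"
    by (rule measure_pmf.finite_measure_mono) auto
  then show ?thesis by (simp add: measure_pmf_single pmf_map)
qed

lemma cond_info_eq_log_inverse: "cond_info p yu = log 2 (1 / cond_prob p (fst yu) (snd yu))"
  by (simp add: cond_info_def log_recip)

lemma one_le_inverse_cond_prob:
  assumes "yu \<in> set_pmf p"
  shows "1 \<le> 1 / cond_prob p (fst yu) (snd yu)"
  using assms pmf_le_pmf_map_snd[of p yu] pmf_positive[OF assms]
  by (simp add: cond_prob_def)

lemma card_pos_if_fst_set_pmf_in:
  assumes "finite Ys" and "\<forall>yu \<in> set_pmf p. fst yu \<in> Ys"
  shows "0 < card Ys"
proof -
  obtain yu where "yu \<in> set_pmf p" using set_pmf_not_empty[of p] by blast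
  then show ?thesis using assms card_gt_0_iff by blast
qed

lemma nn_integral_inverse_cond_prob_le:
  assumes Ys: "finite Ys" and supp: "\<forall>yu \<in> set_pmf p. fst yu \<in> Ys"
  shows "(\<integral>\<^sup>+yu. 1 / cond_prob p (fst yu) (snd yu) \<partial>p) \<le> card Ys"
proof -
  define q where "q = pair_pmf (pmf_of_set Ys) (map_pmf snd p)"
  have card: "0 < card Ys" using card_pos_if_fst_set_pmf_in[OF Ys supp] .
  then have "Ys \<noteq> {}" by auto
  have "(\<integral>\<^sup>+yu. 1 / cond_prob p (fst yu) (snd yu) \<partial>p)
      = (\<integral>\<^sup>+yu. ennreal (pmf p yu * (1 / cond_prob p (fst yu) (snd yu))) \<partial>count_space UNIV)"
    by (simp add: nn_integral_measure_pmf ennreal_mult'[symmetric])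
  also have "\<dots> \<le> (\<integral>\<^sup>+yu. card Ys * ennreal (pmf q yu) \<partial>count_space UNIV)"
  proof (intro nn_integral_mono)
    fix yu :: "'a \<times> 'b"
    show "ennreal (pmf p yu * (1 / cond_prob p (fst yu) (snd yu))) \<le> card Ys * ennreal (pmf q yu)"
    proof (cases "yu \<in> set_pmf p")
      case True
      then have "pmf p yu * (1 / cond_prob p (fst yu) (snd yu)) = card Ys * pmf q yu"
        using supp card \<open>Ys \<noteq> {}\<close> pmf_positive[OF True]
        by (cases yu) (auto simp: q_def cond_prob_def pmf_pair Ys)
      then show ?thesis by (simp add: ennreal_mult' ennreal_of_nat_eq_real_of_nat)
    next
      case False
      then show ?thesis by (simp add: set_pmf_iff)
    qed
  qed
  also have "\<dots> = card Ys"
    by (simp add: nn_integral_cmult nn_integral_pmf measure_pmf.emeasure_space_1)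
  finally show ?thesis .
qed

lemma integrable_inverse_cond_prob:
  assumes "finite Ys" and "\<forall>yu \<in> set_pmf p. fst yu \<in> Ys"
  shows "integrable p (\<lambda>yu. 1 / cond_prob p (fst yu) (snd yu))"
proof (rule integrableI_nonneg)
  show "(\<integral>\<^sup>+yu. 1 / cond_prob p (fst yu) (snd yu) \<partial>p) < \<infinity>"
    using nn_integral_inverse_cond_prob_le[OF assms] of_nat_less_top[of "card Ys"]
    unfolding infinity_ennreal_def by (rule order.strict_trans1)
qed (auto simp: cond_prob_def)

lemma expectation_inverse_cond_prob_le:
  assumes "finite Ys" and "\<forall>yu \<in> set_pmf p. fst yu \<in> Ys"
  shows "measure_pmf.expectation p (\<lambda>yu. 1 / cond_prob p (fst yu) (snd yu)) \<le> card Ys"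
  using nn_integral_inverse_cond_prob_le[OF assms] integrable_inverse_cond_prob[OF assms]
  by (subst (asm) nn_integral_eq_integral) (auto simp: cond_prob_def)

theorem lemma8:
  fixes p :: "('y \<times> 'u) pmf" and Ys :: "'y set" and \<mu> \<epsilon> c :: real
  assumes "finite Ys"
    and "\<forall>yu \<in> set_pmf p. fst yu \<in> Ys"
    and "0 < \<mu>" and "\<mu> < 1/2" and "\<epsilon> > 0" and "c > 0"
    and "measure_pmf.prob p {yu. \<bar>cond_info p yu - c\<bar> > \<epsilon>} < \<mu>"
  shows "\<bar>cond_entropy p - c\<bar> < \<epsilon> + \<mu> * log 2 (real (card Ys) / \<mu>\<^sup>2)"
proof -
  define g where "g yu = 1 / cond_prob p (fst yu) (snd yu)" for yu
  define s where "s = measure_pmf.prob p {yu. \<bar>cond_info p yu - c\<bar> > \<epsilon>}"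
  have info: "cond_info p = (\<lambda>yu. log 2 (g yu))"
    by (simp add: fun_eq_iff g_def cond_info_eq_log_inverse)
  have g_ge_1: "AE yu in p. 1 \<le> g yu"
    by (simp add: AE_measure_pmf_iff g_def one_le_inverse_cond_prob)
  have g_int: "integrable p g"
    unfolding g_def using integrable_inverse_cond_prob[OF assms(1,2)] .
  have g_le: "measure_pmf.expectation p g \<le> card Ys"
    unfolding g_def using expectation_inverse_cond_prob_le[OF assms(1,2)] .
  have "\<bar>cond_entropy p - c\<bar> \<le> \<epsilon> + s * log 2 (card Ys / s)"
    using measure_pmf.expectation_log_deviation_le[OF g_int g_ge_1 g_le, of c \<epsilon>] assms
    by (simp add: cond_entropy_def info s_def)
  also have "\<dots> < \<epsilon> + \<mu> * log 2 (card Ys / \<mu>\<^sup>2)"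
    using mult_log_div_less[of s \<mu> "card Ys"] card_pos_if_fst_set_pmf_in[OF assms(1,2)] assms
    by (simp add: s_def)
  finally show ?thesis .
qed

end
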